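(* Let $0<q,r<\infty$ and let $u,v,w$ be weights on $(0,\infty)$. Let $\{x_k\}$ be the covering sequence associated with $u$ and $\mathcal Z$ its index set (as described in the context). Then $$\bigg( \int_0^{\infty} \bigg( \int_x^{\infty} \bigg( \int_t^{\infty} h \bigg)^q w(t)\,dt\bigg)^{r / q} u(x)\,dx \bigg)^{1/r} \approx \bigg\| \bigg\{ 2^{k / r} \bigg(\int_{x_k}^{x_{k+1}} \bigg( \int_s^{x_{k+1}} h \bigg)^q w(s)\,ds\bigg)^{ 1 / q}\bigg\} \bigg\|_{\ell^r(\mathcal Z)} + \bigg\| \bigg\{ 2^{k / r} \bigg(\int_{x_k}^{x_{k+1}} w \bigg)^{1 / q} \bigg( \int_{x_{k+1}}^{\infty} h\bigg)\bigg\} \bigg\|_{\ell^r(\mathcal Z)}$$ with constants independent of $h\in\mathfrak M^+(0,\infty)$.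
   Context: $\mathfrak M^+(0,\infty)$: non-negative measurable functions on $(0,\infty)$. A weight is $v\in\mathfrak M^+(0,\infty)$ with $0<\int_0^x v<\infty$ for all $x>0$. Covering sequence: if $\int_0^\infty u=\infty$, $\{x_k\}_{k\in\mathbb Z}$ is the strictly increasing sequence with $\int_0^{x_k}u=2^k$, and $\mathcal Z=\mathbb Z$. If $\int_0^\infty u<\infty$, let $M\in\mathbb Z$ satisfy $2^M\le\int_0^\infty u<2^{M+1}$, let $\int_0^{x_k}u=2^k$ for $k\le M$, $x_{M+1}=\infty$, and $\mathcal Z=\{k\in\mathbb Z: k\le M\}$. For a sequence $\{a_k\}_{k\in\mathcal Z}$, $\|\{a_k\}\|_{\ell^r(\mathcal Z)}=(\sum_{k\in\mathcal Z}|a_k|^r)^{1/r}$. $A\approx B$ means two-sided inequality with constants depending only on $q,r$. *)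

theory Defs
  imports "HOL-Analysis.Analysis"
begin

definition epow :: "ennreal \<Rightarrow> real \<Rightarrow> ennreal" where
  "epow x p = (if x = top then top else ennreal (enn2real x powr p))"

definition nonneg_meas :: "(real \<Rightarrow> real) \<Rightarrow> bool" where
  "nonneg_meas f \<longleftrightarrow> f \<in> borel_measurable borel \<and> (\<forall>x>0. 0 \<le> f x)"

definition is_weight :: "(real \<Rightarrow> real) \<Rightarrow> bool" where
  "is_weight v \<longleftrightarrow> nonneg_meas v \<and>
     (\<forall>x>0. 0 < (\<integral>\<^sup>+ t\<in>{0<..x}. ennreal (v t) \<partial>lborel)
           \<and> (\<integral>\<^sup>+ t\<in>{0<..x}. ennreal (v t) \<partial>lborel) < \<infinity>)"

(* Covering sequence xs with index set Z associated with u.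
  Points are extended reals so that xM+1 =  in the finite case. *)
definition covering_seq :: "(real \<Rightarrow> real) \<Rightarrow> int set \<Rightarrow> (int \<Rightarrow> ereal) \<Rightarrow> bool" where
  "covering_seq u Z xs \<longleftrightarrow>
    (if (\<integral>\<^sup>+ t\<in>{0<..}. ennreal (u t) \<partial>lborel) = \<infinity> then
       Z = UNIV \<and> strict_mono xs \<and>
       (\<forall>k. \<exists>y>0. xs k = ereal y \<and>
            (\<integral>\<^sup>+ t\<in>{0<..y}. ennreal (u t) \<partial>lborel) = ennreal (2 powr real_of_int k))
     else
       (\<exists>M::int.
          ennreal (2 powr real_of_int M) \<le> (\<integral>\<^sup>+ t\<in>{0<..}. ennreal (u t) \<partial>lborel) \<and>
          (\<integral>\<^sup>+ t\<in>{0<..}. ennreal (u t) \<partial>lborel) < ennreal (2 powr real_of_int (M + 1)) \<and>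
          Z = {..M} \<and> strict_mono_on {..M+1} xs \<and>
          (\<forall>k\<le>M. \<exists>y>0. xs k = ereal y \<and>
            (\<integral>\<^sup>+ t\<in>{0<..y}. ennreal (u t) \<partial>lborel) = ennreal (2 powr real_of_int k)) \<and>
          xs (M + 1) = \<infinity>))"

definition lhs42 :: "real \<Rightarrow> real \<Rightarrow> (real \<Rightarrow> real) \<Rightarrow> (real \<Rightarrow> real) \<Rightarrow> (real \<Rightarrow> real) \<Rightarrow> ennreal" where
  "lhs42 q r u w h =
     epow (\<integral>\<^sup>+ x\<in>{0<..}.
        epow (\<integral>\<^sup>+ t\<in>{x<..}. epow (\<integral>\<^sup>+ s\<in>{t<..}. ennreal (h s) \<partial>lborel) q * ennreal (w t) \<partial>lborel) (r / q)
        * ennreal (u x) \<partial>lborel) (1 / r)"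

definition disc1 :: "real \<Rightarrow> real \<Rightarrow> int set \<Rightarrow> (int \<Rightarrow> ereal) \<Rightarrow> (real \<Rightarrow> real) \<Rightarrow> (real \<Rightarrow> real) \<Rightarrow> ennreal" where
  "disc1 q r Z xs w h =
     epow (\<integral>\<^sup>+ k. epow (ennreal (2 powr (real_of_int k / r)) *
        epow (\<integral>\<^sup>+ s\<in>{s. xs k < ereal s \<and> ereal s < xs (k + 1)}.
           epow (\<integral>\<^sup>+ t\<in>{t. s < t \<and> ereal t < xs (k + 1)}. ennreal (h t) \<partial>lborel) q
             * ennreal (w s) \<partial>lborel) (1 / q)) r \<partial>count_space Z) (1 / r)"

definition disc2 :: "real \<Rightarrow> real \<Rightarrow> int set \<Rightarrow> (int \<Rightarrow> ereal) \<Rightarrow> (real \<Rightarrow> real) \<Rightarrow> (real \<Rightarrow> real) \<Rightarrow> ennreal" where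
  "disc2 q r Z xs w h =
     epow (\<integral>\<^sup>+ k. epow (ennreal (2 powr (real_of_int k / r)) *
        epow (\<integral>\<^sup>+ s\<in>{s. xs k < ereal s \<and> ereal s < xs (k + 1)}. ennreal (w s) \<partial>lborel) (1 / q) *
        (\<integral>\<^sup>+ t\<in>{t. xs (k + 1) < ereal t}. ennreal (h t) \<partial>lborel)) r \<partial>count_space Z) (1 / r)"

end

theory Submission
  imports Defs
begin

text \<open>Write \<open>H(t) = \<integral>\<^sub>t\<^sup>\<infinity> h\<close> and \<open>F(x) = \<integral>\<^sub>x\<^sup>\<infinity> H\<^sup>q w\<close>, so that the left-hand side is
  \<open>(\<integral> F\<^bsup>r/q\<^esup> u)\<^bsup>1/r\<^esup>\<close>. The covering points cut \<open>(0,\<infinity>)\<close> into the cells \<open>(x\<^sub>k, x\<^sub>k\<^sub>+\<^sub>1]\<close> of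
  \<open>u\<close>-mass \<open>2\<^sup>k\<close> (at most \<open>2\<^sup>k\<close> for a last, unbounded cell), and \<open>F\<close> decreases, so
  \<open>\<integral> F\<^bsup>r/q\<^esup> u\<close> lies between \<open>\<Sum>\<^sub>k 2\<^sup>k F(x\<^sub>k)\<^bsup>r/q\<^esup>\<close> and half of it.
  Splitting \<open>H(t)\<close> at \<open>x\<^sub>k\<^sub>+\<^sub>1\<close> bounds the part of \<open>F(x\<^sub>k)\<close> coming from the \<open>k\<close>-th cell by
  the \<open>k\<close>-th terms \<open>A\<^sub>k + B\<^sub>k\<close> of the two discrete norms; summing over the cells above \<open>k\<close>
  and applying a discrete Hardy inequality for the weights \<open>2\<^sup>k\<close> gives the upper bound.
  Conversely \<open>A\<^sub>k\<close> and \<open>B\<^sub>k\<close> are each at most \<open>F(x\<^sub>k)\<close>, which gives the lower bound.\<close>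

lemma epow_top [simp]: "epow top p = top"
  by (simp add: epow_def)

lemma epow_zero [simp]: "p > 0 \<Longrightarrow> epow 0 p = 0"
  by (simp add: epow_def)

lemma epow_ennreal: "0 \<le> c \<Longrightarrow> epow (ennreal c) p = ennreal (c powr p)"
  by (simp add: epow_def)

lemma epow_2_powr: "epow (ennreal (2 powr x)) p = ennreal (2 powr (x * p))"
  by (simp add: epow_ennreal powr_powr)

lemma epow_2: "epow 2 p = ennreal (2 powr p)"
  using epow_ennreal[of 2 p] by simp

lemma epow_mono:
  assumes "p > 0" "a \<le> b"
  shows "epow a p \<le> epow b p"
proof (cases "b = top")
  case False
  then have "a \<noteq> top" using assms top.extremum_uniqueI by auto
  then show ?thesis using False assms
    by (auto simp: epow_def top.not_eq_extremum intro!: ennreal_leI powr_mono2 enn2real_mono)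
qed simp

lemma epow_mult:
  assumes "p > 0"
  shows "epow (a * b) p = epow a p * epow b p"
proof (cases "a = 0 \<or> b = 0")
  case nonzero: False
  show ?thesis
  proof (cases "a = top \<or> b = top")
    case True
    have "epow a p \<noteq> 0" "epow b p \<noteq> 0"
      using nonzero assms by (auto simp: epow_def enn2real_eq_0_iff)
    then show ?thesis using True nonzero by (auto simp: ennreal_mult_eq_top_iff)
  next
    case False
    then have "a * b \<noteq> top" by (simp add: ennreal_mult_eq_top_iff)
    then show ?thesis using False
      by (simp add: epow_def enn2real_mult powr_mult ennreal_mult)
  qed
qed (use assms in auto)

lemma epow_ennreal_mult:
  "0 \<le> c \<Longrightarrow> p > 0 \<Longrightarrow> epow (ennreal c * x) p = ennreal (c powr p) * epow x p"
  by (simp add: epow_mult epow_ennreal)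

lemma epow_2_powr_mult:
  "p > 0 \<Longrightarrow> epow (ennreal (2 powr x) * a) p = ennreal (2 powr (x * p)) * epow a p"
  by (simp add: epow_mult epow_2_powr)

lemma epow_epow: "p > 0 \<Longrightarrow> s > 0 \<Longrightarrow> epow (epow a p) s = epow a (p * s)"
  by (auto simp: epow_def powr_powr)

lemma epow_1 [simp]: "epow a 1 = a"
  by (cases a) (auto simp: epow_def)

lemma epow_epow_inverse: "p > 0 \<Longrightarrow> epow (epow a p) (1/p) = a"
  by (simp add: epow_epow)

lemma epow_max: "p > 0 \<Longrightarrow> epow (max a b) p = max (epow a p) (epow b p)"
  by (metis epow_mono max.absorb_iff2 max.commute nle_le)

lemma epow_add_le:
  assumes "p > 0"
  shows "epow (a + b) p \<le> ennreal (2 powr p) * (epow a p + epow b p)"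
proof -
  have "a + b \<le> 2 * max a b"
    by (metis add_mono max.cobounded1 max.cobounded2 mult_2)
  then have "epow (a + b) p \<le> epow (2 * max a b) p" by (rule epow_mono[OF assms])
  also have "\<dots> = ennreal (2 powr p) * max (epow a p) (epow b p)"
    by (simp add: epow_mult epow_max epow_2 assms)
  also have "max (epow a p) (epow b p) \<le> epow a p + epow b p"
    by (simp add: add_increasing add_increasing2)
  finally show ?thesis by (simp add: mult_left_mono)
qed

lemma epow_add_epow_le:
  assumes "p > 0"
  shows "epow a p + epow b p \<le> 2 * epow (a + b) p"
proof -
  have "epow a p \<le> epow (a + b) p" "epow b p \<le> epow (a + b) p"
    by (intro epow_mono[OF assms] add_increasing add_increasing2; simp)+
  then show ?thesis by (metis add_mono mult_2)
qed

lemma epow_measurable [measurable (raw)]: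
  assumes [measurable]: "f \<in> borel_measurable M"
  shows "(\<lambda>x. epow (f x) p) \<in> borel_measurable M"
proof -
  have [measurable]: "{x \<in> space M. f x = top} \<in> sets M" by measurable
  show ?thesis unfolding epow_def by measurable
qed

lemma nn_integral_count_space_mono_set:
  "A \<subseteq> B \<Longrightarrow> (\<integral>\<^sup>+ x. f x \<partial>count_space A) \<le> (\<integral>\<^sup>+ x. f x \<partial>count_space B)"
  by (auto simp: nn_integral_count_space_indicator intro!: nn_integral_mono split: split_indicator)

lemma two_powr_neg_less_1: "(c::real) > 0 \<Longrightarrow> 2 powr - c < 1"
  using powr_less_mono[of "- c" 0 2] by simp

lemma nn_integral_geometric_2_powr:
  assumes "c > 0"
  shows "(\<integral>\<^sup>+ n. ennreal (2 powr (- real n * c)) \<partial>count_space UNIV) = ennreal (1 / (1 - 2 powr - c))"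
proof -
  have lt: "2 powr - c < 1" by (rule two_powr_neg_less_1[OF assms])
  have pow: "2 powr (- real n * c) = (2 powr - c) ^ n" for n
    by (simp add: powr_realpow[symmetric] powr_powr mult.commute)
  have "(\<integral>\<^sup>+ n. ennreal (2 powr (- real n * c)) \<partial>count_space UNIV) = (\<Sum>n. ennreal ((2 powr - c) ^ n))"
    by (simp only: nn_integral_count_space_nat pow)
  also have "\<dots> = ennreal (\<Sum>n. (2 powr - c) ^ n)"
    by (rule suminf_ennreal2) (auto intro!: summable_geometric simp: lt)
  also have "(\<Sum>n. (2 powr - c) ^ n) = 1 / (1 - 2 powr - c)"
    by (rule suminf_geometric) (simp add: lt)
  finally show ?thesis .
qed

lemma geometric_sum_above_le:
  assumes "c > 0"
  shows "(\<integral>\<^sup>+ j. ennreal (2 powr (- real_of_int (j - k) * c)) * indicator {k..} j \<partial>count_space Z)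
         \<le> ennreal (1 / (1 - 2 powr - c))"
proof -
  have bij: "bij_betw (\<lambda>n::nat. k + int n) UNIV {k..}"
    unfolding bij_betw_def inj_on_def
    by (auto simp: image_def intro!: exI[of _ "nat (x - k)" for x])
  have "(\<integral>\<^sup>+ j. ennreal (2 powr (- real_of_int (j - k) * c)) * indicator {k..} j \<partial>count_space Z)
      \<le> (\<integral>\<^sup>+ j. ennreal (2 powr (- real_of_int (j - k) * c)) * indicator {k..} j \<partial>count_space UNIV)"
    by (rule nn_integral_count_space_mono_set) simp
  also have "\<dots> = (\<integral>\<^sup>+ j. ennreal (2 powr (- real_of_int (j - k) * c)) \<partial>count_space {k..})"
    by (simp add: nn_integral_count_space_indicator)
  also have "\<dots> = (\<integral>\<^sup>+ n. ennreal (2 powr (- real_of_int ((k + int n) - k) * c)) \<partial>count_space UNIV)"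
    by (rule nn_integral_bij_count_space[OF bij, symmetric])
  also have "\<dots> = ennreal (1 / (1 - 2 powr - c))"
    using nn_integral_geometric_2_powr[OF assms] by simp
  finally show ?thesis .
qed

lemma geometric_sum_below_le:
  assumes "c > 0"
  shows "(\<integral>\<^sup>+ i. ennreal (2 powr (- real_of_int (j - i) * c)) * indicator {..j} i \<partial>count_space Z)
         \<le> ennreal (1 / (1 - 2 powr - c))"
proof -
  have bij: "bij_betw (\<lambda>n::nat. j - int n) UNIV {..j}"
    unfolding bij_betw_def inj_on_def
    by (auto simp: image_def intro!: exI[of _ "nat (j - x)" for x])
  have "(\<integral>\<^sup>+ i. ennreal (2 powr (- real_of_int (j - i) * c)) * indicator {..j} i \<partial>count_space Z)
      \<le> (\<integral>\<^sup>+ i. ennreal (2 powr (- real_of_int (j - i) * c)) * indicator {..j} i \<partial>count_space UNIV)"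
    by (rule nn_integral_count_space_mono_set) simp
  also have "\<dots> = (\<integral>\<^sup>+ i. ennreal (2 powr (- real_of_int (j - i) * c)) \<partial>count_space {..j})"
    by (simp add: nn_integral_count_space_indicator)
  also have "\<dots> = (\<integral>\<^sup>+ n. ennreal (2 powr (- real_of_int (j - (j - int n)) * c)) \<partial>count_space UNIV)"
    by (rule nn_integral_bij_count_space[OF bij, symmetric])
  also have "\<dots> = ennreal (1 / (1 - 2 powr - c))"
    using nn_integral_geometric_2_powr[OF assms] by simp
  finally show ?thesis .
qed

definition hardy_const :: "real \<Rightarrow> real" where
  "hardy_const p = (1 / (1 - 2 powr - (1 / (2 * p)))) powr p * (1 / (1 - 2 powr - (1/2)))"

lemma hardy_const_pos: "p > 0 \<Longrightarrow> hardy_const p > 0"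
  unfolding hardy_const_def
  using two_powr_neg_less_1[of "1 / (2 * p)"] two_powr_neg_less_1[of "1/2"]
  by (intro mult_pos_pos) simp_all

text \<open>In place of Hoelder's inequality: every \<open>a\<^sub>j\<close> is at most \<open>2\<^bsup>-(j-k)/(2p)\<^esup> T\<^bsup>1/p\<^esup>\<close>,
  where \<open>T\<close> is the weighted sum on the right, and these bounds sum geometrically.\<close>

lemma epow_tail_sum_le:
  fixes a :: "int \<Rightarrow> ennreal" and k :: int and Z :: "int set"
  assumes p: "p > 0"
  defines "T \<equiv> \<integral>\<^sup>+ j. ennreal (2 powr (real_of_int (j - k) / 2)) * epow (a j) p * indicator {k..} j \<partial>count_space Z"
  shows "epow (\<integral>\<^sup>+ j. a j * indicator {k..} j \<partial>count_space Z) p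
           \<le> ennreal ((1 / (1 - 2 powr - (1 / (2 * p)))) powr p) * T"
proof -
  define e where "e = 1 / (2 * p)"
  have e: "e > 0" using p by (simp add: e_def)
  have pointwise: "a j * indicator {k..} j
      \<le> ennreal (2 powr (- real_of_int (j - k) * e)) * indicator {k..} j * epow T (1/p)"
    if j: "j \<in> Z" for j
  proof (cases "k \<le> j")
    case True
    define d where "d = real_of_int (j - k) / 2"
    have "ennreal (2 powr d) * epow (a j) p * indicator {k..} j \<le> T"
      unfolding T_def d_def by (rule nn_integral_ge_point[OF j])
    then have term_le: "ennreal (2 powr d) * epow (a j) p \<le> T" using True by simp
    have "ennreal (2 powr (-d)) * ennreal (2 powr d) = 1"
      by (simp add: ennreal_mult[symmetric] powr_add[symmetric] del: ennreal_mult')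
    then have "epow (a j) p = ennreal (2 powr (-d)) * (ennreal (2 powr d) * epow (a j) p)"
      by (simp add: mult.assoc[symmetric])
    also have "\<dots> \<le> ennreal (2 powr (-d)) * T"
      by (rule mult_left_mono[OF term_le]) simp
    finally have "epow (epow (a j) p) (1/p) \<le> epow (ennreal (2 powr (-d)) * T) (1/p)"
      by (rule epow_mono[rotated]) (simp add: p)
    also have "\<dots> = ennreal (2 powr (- real_of_int (j - k) * e)) * epow T (1/p)"
      using p by (simp add: epow_2_powr_mult d_def e_def minus_divide_left)
    finally show ?thesis using True p by (simp add: epow_epow_inverse)
  qed simp
  have "(\<integral>\<^sup>+ j. a j * indicator {k..} j \<partial>count_space Z)
      \<le> (\<integral>\<^sup>+ j. ennreal (2 powr (- real_of_int (j - k) * e)) * indicator {k..} j * epow T (1/p) \<partial>count_space Z)"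
    by (rule nn_integral_mono) (use pointwise in simp)
  also have "\<dots> = (\<integral>\<^sup>+ j. ennreal (2 powr (- real_of_int (j - k) * e)) * indicator {k..} j \<partial>count_space Z) * epow T (1/p)"
    by (simp add: nn_integral_multc)
  also have "\<dots> \<le> ennreal (1 / (1 - 2 powr - e)) * epow T (1/p)"
    by (rule mult_right_mono[OF geometric_sum_above_le[OF e]]) simp
  finally have "epow (\<integral>\<^sup>+ j. a j * indicator {k..} j \<partial>count_space Z) p
      \<le> epow (ennreal (1 / (1 - 2 powr - e)) * epow T (1/p)) p"
    by (rule epow_mono[OF p])
  also have "\<dots> = ennreal ((1 / (1 - 2 powr - e)) powr p) * T"
    using p two_powr_neg_less_1[OF e] by (simp add: epow_ennreal_mult epow_epow)
  finally show ?thesis by (simp add: e_def)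
qed

lemma dyadic_tail_sum_le:
  fixes b :: "int \<Rightarrow> ennreal"
  shows "(\<integral>\<^sup>+ k. ennreal (2 powr real_of_int k) *
            (\<integral>\<^sup>+ j. ennreal (2 powr (real_of_int (j - k) / 2)) * b j * indicator {k..} j \<partial>count_space Z)
          \<partial>count_space Z)
         \<le> ennreal (1 / (1 - 2 powr - (1/2))) * (\<integral>\<^sup>+ j. ennreal (2 powr real_of_int j) * b j \<partial>count_space Z)"
proof -
  have weights: "ennreal (2 powr real_of_int k) * ennreal (2 powr (real_of_int (j - k) / 2))
      = ennreal (2 powr real_of_int j) * ennreal (2 powr (- real_of_int (j - k) * (1/2)))" for j k :: int
  proof -
    have "real_of_int k + real_of_int (j - k) / 2 = real_of_int j + (- real_of_int (j - k) * (1/2))"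
      by (simp add: field_simps)
    then show ?thesis by (simp add: ennreal_mult[symmetric] powr_add[symmetric] del: ennreal_mult')
  qed
  have "(\<integral>\<^sup>+ k. ennreal (2 powr real_of_int k) *
            (\<integral>\<^sup>+ j. ennreal (2 powr (real_of_int (j - k) / 2)) * b j * indicator {k..} j \<partial>count_space Z)
          \<partial>count_space Z)
      = (\<integral>\<^sup>+ k. \<integral>\<^sup>+ j. ennreal (2 powr real_of_int k) * (ennreal (2 powr (real_of_int (j - k) / 2)) * b j * indicator {k..} j)
          \<partial>count_space Z \<partial>count_space Z)"
    by (simp add: nn_integral_cmult)
  also have "\<dots> = (\<integral>\<^sup>+ j. \<integral>\<^sup>+ k. ennreal (2 powr real_of_int k) * (ennreal (2 powr (real_of_int (j - k) / 2)) * b j * indicator {k..} j)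
          \<partial>count_space Z \<partial>count_space Z)"
    by (rule nn_integral_count_space_nn_integral[symmetric]) simp_all
  also have "\<dots> = (\<integral>\<^sup>+ j. ennreal (2 powr real_of_int j) * b j *
        (\<integral>\<^sup>+ k. ennreal (2 powr (- real_of_int (j - k) * (1/2))) * indicator {..j} k \<partial>count_space Z) \<partial>count_space Z)"
  proof (rule nn_integral_cong)
    fix j
    have "ennreal (2 powr real_of_int k) * (ennreal (2 powr (real_of_int (j - k) / 2)) * b j * indicator {k..} j)
        = ennreal (2 powr real_of_int j) * b j * (ennreal (2 powr (- real_of_int (j - k) * (1/2))) * indicator {..j} k)"
      for k
      using weights[of k j] by (simp add: indicator_def mult_ac)
    then show "(\<integral>\<^sup>+ k. ennreal (2 powr real_of_int k) * (ennreal (2 powr (real_of_int (j - k) / 2)) * b j * indicator {k..} j) \<partial>count_space Z)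
        = ennreal (2 powr real_of_int j) * b j * (\<integral>\<^sup>+ k. ennreal (2 powr (- real_of_int (j - k) * (1/2))) * indicator {..j} k \<partial>count_space Z)"
      by (simp add: nn_integral_cmult)
  qed
  also have "\<dots> \<le> (\<integral>\<^sup>+ j. ennreal (2 powr real_of_int j) * b j * ennreal (1 / (1 - 2 powr - (1/2))) \<partial>count_space Z)"
    by (intro nn_integral_mono mult_left_mono geometric_sum_below_le) simp_all
  also have "\<dots> = ennreal (1 / (1 - 2 powr - (1/2))) * (\<integral>\<^sup>+ j. ennreal (2 powr real_of_int j) * b j \<partial>count_space Z)"
    by (subst nn_integral_cmult[symmetric]) (auto simp: mult_ac)
  finally show ?thesis .
qed

lemma discrete_hardy:
  fixes a :: "int \<Rightarrow> ennreal"
  assumes p: "p > 0"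
  shows "(\<integral>\<^sup>+ k. ennreal (2 powr real_of_int k) * epow (\<integral>\<^sup>+ j. a j * indicator {k..} j \<partial>count_space Z) p \<partial>count_space Z)
        \<le> ennreal (hardy_const p) * (\<integral>\<^sup>+ k. ennreal (2 powr real_of_int k) * epow (a k) p \<partial>count_space Z)"
proof -
  define G where "G = (1 / (1 - 2 powr - (1 / (2 * p)))) powr p"
  define T where "T k = (\<integral>\<^sup>+ j. ennreal (2 powr (real_of_int (j - k) / 2)) * epow (a j) p * indicator {k..} j \<partial>count_space Z)" for k
  have "(\<integral>\<^sup>+ k. ennreal (2 powr real_of_int k) * epow (\<integral>\<^sup>+ j. a j * indicator {k..} j \<partial>count_space Z) p \<partial>count_space Z)
      \<le> (\<integral>\<^sup>+ k. ennreal G * (ennreal (2 powr real_of_int k) * T k) \<partial>count_space Z)"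
  proof (rule nn_integral_mono)
    fix k
    have "epow (\<integral>\<^sup>+ j. a j * indicator {k..} j \<partial>count_space Z) p \<le> ennreal G * T k"
      unfolding G_def T_def by (rule epow_tail_sum_le[OF p])
    then show "ennreal (2 powr real_of_int k) * epow (\<integral>\<^sup>+ j. a j * indicator {k..} j \<partial>count_space Z) p
        \<le> ennreal G * (ennreal (2 powr real_of_int k) * T k)"
      by (metis mult.left_commute mult_left_mono zero_le)
  qed
  also have "\<dots> = ennreal G * (\<integral>\<^sup>+ k. ennreal (2 powr real_of_int k) * T k \<partial>count_space Z)"
    by (simp add: nn_integral_cmult)
  also have "\<dots> \<le> ennreal G * (ennreal (1 / (1 - 2 powr - (1/2))) *
      (\<integral>\<^sup>+ k. ennreal (2 powr real_of_int k) * epow (a k) p \<partial>count_space Z))"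
    unfolding T_def by (intro mult_left_mono dyadic_tail_sum_le) simp
  also have "\<dots> = ennreal (hardy_const p) * (\<integral>\<^sup>+ k. ennreal (2 powr real_of_int k) * epow (a k) p \<partial>count_space Z)"
  proof -
    have "ennreal (hardy_const p) = ennreal G * ennreal (1 / (1 - 2 powr - (1/2)))"
      unfolding hardy_const_def G_def
      by (rule ennreal_mult) (use two_powr_neg_less_1[of "1/2"] in simp_all)
    then show ?thesis by (simp add: mult.assoc)
  qed
  finally show ?thesis .
qed

definition weight_upto :: "(real \<Rightarrow> real) \<Rightarrow> real \<Rightarrow> ennreal" where
  "weight_upto u y = (\<integral>\<^sup>+ t\<in>{0<..y}. ennreal (u t) \<partial>lborel)"

definition weight_total :: "(real \<Rightarrow> real) \<Rightarrow> ennreal" where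
  "weight_total u = (\<integral>\<^sup>+ t\<in>{0<..}. ennreal (u t) \<partial>lborel)"

text \<open>A description of \<open>covering_seq\<close> that does not distinguish the cases
  \<open>\<integral> u = \<infinity>\<close> and \<open>\<integral> u < \<infinity>\<close>: \<open>Z\<close> is a nonempty down-closed set of indices, and
  \<open>x\<^sub>k\<^sub>+\<^sub>1 = \<infinity>\<close> exactly when \<open>k\<close> is the largest one.\<close>

definition dyadic_cover :: "(real \<Rightarrow> real) \<Rightarrow> int set \<Rightarrow> (int \<Rightarrow> ereal) \<Rightarrow> bool" where
  "dyadic_cover u Z xs \<longleftrightarrow> Z \<noteq> {} \<and> (\<forall>k\<in>Z. \<forall>j\<le>k. j \<in> Z) \<and>
     (\<forall>k\<in>Z. \<exists>y>0. xs k = ereal y \<and> weight_upto u y = ennreal (2 powr real_of_int k)) \<and>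
     (\<forall>k\<in>Z. k + 1 \<notin> Z \<longrightarrow> xs (k + 1) = \<infinity> \<and> weight_total u < ennreal (2 powr real_of_int (k + 1))) \<and>
     (\<forall>j\<in>Z. \<forall>k\<in>Z. j < k \<longrightarrow> xs (j + 1) \<le> xs k) \<and>
     (\<forall>k\<in>Z. xs k < xs (k + 1))"

lemma covering_seq_imp_dyadic_cover:
  assumes "covering_seq u Z xs"
  shows "dyadic_cover u Z xs"
proof (cases "weight_total u = \<infinity>")
  case True
  then have Z: "Z = UNIV" and mono: "strict_mono xs" and
    pts: "\<forall>k. \<exists>y>0. xs k = ereal y \<and> weight_upto u y = ennreal (2 powr real_of_int k)"
    using assms unfolding covering_seq_def weight_total_def weight_upto_def by auto
  show ?thesis unfolding dyadic_cover_def Z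
    using pts by (auto intro: strict_mono_leD[OF mono] strict_monoD[OF mono])
next
  case False
  then obtain M :: int where
    below: "weight_total u < ennreal (2 powr real_of_int (M + 1))" and
    Z: "Z = {..M}" and mono: "strict_mono_on {..M+1} xs" and
    pts: "\<forall>k\<le>M. \<exists>y>0. xs k = ereal y \<and> weight_upto u y = ennreal (2 powr real_of_int k)" and
    last: "xs (M + 1) = \<infinity>"
    using assms unfolding covering_seq_def weight_total_def weight_upto_def by auto
  have "xs (j + 1) \<le> xs k" if "j \<le> M" "k \<le> M" "j < k" for j k
    by (rule strict_mono_on_leD[OF mono]) (use that in auto)
  moreover have "xs k < xs (k + 1)" if "k \<le> M" for k
    by (rule strict_mono_onD[OF mono]) (use that in auto)
  moreover have last_index: "k = M" if "k \<le> M" "\<not> k + 1 \<le> M" for k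
    using that by simp
  ultimately show ?thesis unfolding dyadic_cover_def Z
    using pts below last by (auto dest!: last_index)
qed

lemma weight_upto_mono: "a \<le> b \<Longrightarrow> weight_upto u a \<le> weight_upto u b"
  unfolding weight_upto_def by (rule nn_set_integral_set_mono) auto

lemma dyadic_cover_point:
  assumes "dyadic_cover u Z xs" "k \<in> Z"
  obtains y where "y > 0" "xs k = ereal y" "weight_upto u y = ennreal (2 powr real_of_int k)"
  using assms unfolding dyadic_cover_def by auto

lemma dyadic_cover_succ_le:
  assumes "dyadic_cover u Z xs" "j \<in> Z" "k \<in> Z" "j < k"
  shows "xs (j + 1) \<le> xs k"
  using assms unfolding dyadic_cover_def by blast

lemma dyadic_cover_le:
  assumes c: "dyadic_cover u Z xs" and "m \<in> Z" "k \<in> Z" "m \<le> k"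
  shows "xs m \<le> xs k"
proof (cases "m = k")
  case False
  then have "xs m < xs (m + 1)" "xs (m + 1) \<le> xs k"
    using assms dyadic_cover_succ_le[OF c] unfolding dyadic_cover_def by auto
  then show ?thesis by simp
qed simp

text \<open>Since \<open>0 < \<integral>\<^sub>0\<^sup>t u < \<infinity>\<close>, the indices \<open>k\<close> with \<open>x\<^sub>k < t\<close> are exactly those with
  \<open>2\<^sup>k < \<integral>\<^sub>0\<^sup>t u\<close>: there is one, and they are bounded above.\<close>

lemma dyadic_cover_points_below:
  assumes c: "dyadic_cover u Z xs" and u: "is_weight u" and t: "t > 0"
  shows "\<exists>j\<in>Z. xs j < ereal t" and "\<exists>N. \<forall>i\<in>Z. xs i < ereal t \<longrightarrow> i < N"
proof -
  have "0 < weight_upto u t" "weight_upto u t < \<infinity>"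
    using u t unfolding is_weight_def weight_upto_def by auto
  moreover define w where "w = enn2real (weight_upto u t)"
  ultimately have w: "w > 0" "weight_upto u t = ennreal w"
    by (auto simp: enn2real_positive_iff less_top[symmetric])
  obtain m where m: "m \<in> Z" using c unfolding dyadic_cover_def by auto
  define j where "j = min m (\<lfloor>log 2 w\<rfloor> - 1)"
  have jZ: "j \<in> Z" using c m unfolding dyadic_cover_def j_def by auto
  have "real_of_int j \<le> real_of_int (\<lfloor>log 2 w\<rfloor> - 1)" by (simp add: j_def)
  also have "\<dots> \<le> log 2 w - 1" using of_int_floor_le[of "log 2 w"] by simp
  finally have "2 powr real_of_int j \<le> 2 powr (log 2 w - 1)" by simp
  also have "\<dots> = w / 2" using w by (simp add: powr_diff)
  finally have j_less: "2 powr real_of_int j < w" using w by linarith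
  show "\<exists>j\<in>Z. xs j < ereal t"
  proof (rule bexI[OF _ jZ], rule ccontr)
    assume "\<not> xs j < ereal t"
    moreover obtain y where "xs j = ereal y" "weight_upto u y = ennreal (2 powr real_of_int j)"
      using dyadic_cover_point[OF c jZ] by metis
    ultimately have "weight_upto u t \<le> ennreal (2 powr real_of_int j)"
      using weight_upto_mono[of t y u] by auto
    then show False using w j_less by simp
  qed
  define N where "N = \<lceil>log 2 w\<rceil> + 1"
  have "w = 2 powr (log 2 w)" using w by simp
  also have "\<dots> < 2 powr real_of_int N"
    by (rule powr_less_mono) (auto simp: N_def intro: le_less_trans[OF le_of_int_ceiling])
  finally have w_less: "w < 2 powr real_of_int N" .
  have "i < N" if "i \<in> Z" "xs i < ereal t" for i
  proof -
    obtain y where "xs i = ereal y" "weight_upto u y = ennreal (2 powr real_of_int i)"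
      using dyadic_cover_point[OF c \<open>i \<in> Z\<close>] by metis
    with that have "ennreal (2 powr real_of_int i) \<le> ennreal w"
      using weight_upto_mono[of y t u] w by auto
    then have "2 powr real_of_int i \<le> w" using w by simp
    then have "2 powr real_of_int i < 2 powr real_of_int N" using w_less by linarith
    then show ?thesis by simp
  qed
  then show "\<exists>N. \<forall>i\<in>Z. xs i < ereal t \<longrightarrow> i < N" by blast
qed

lemma dyadic_cover_exhausts:
  assumes c: "dyadic_cover u Z xs" and u: "is_weight u" and t: "t > 0"
  shows "\<exists>k\<in>Z. xs k < ereal t \<and> ereal t \<le> xs (k + 1)"
proof -
  obtain j where j: "j \<in> Z" "xs j < ereal t"
    using dyadic_cover_points_below(1)[OF assms] by blast
  obtain N where N: "\<And>i. i \<in> Z \<Longrightarrow> xs i < ereal t \<Longrightarrow> i < N"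
    using dyadic_cover_points_below(2)[OF assms] by blast
  define S where "S = {i\<in>Z. xs i < ereal t} \<inter> {j..N}"
  define k where "k = Max S"
  have jS: "j \<in> S" using j N by (auto simp: S_def less_imp_le)
  have S: "finite S" "S \<noteq> {}" using jS by (auto simp: S_def)
  then have "k \<in> S" unfolding k_def by (rule Max_in)
  then have k: "k \<in> Z" "xs k < ereal t" by (auto simp: S_def)
  have k_max: "i \<le> k" if "i \<in> S" for i
    using S that by (simp add: k_def)
  have "ereal t \<le> xs (k + 1)"
  proof (cases "k + 1 \<in> Z")
    case True
    show ?thesis
    proof (rule ccontr)
      assume "\<not> ereal t \<le> xs (k + 1)"
      then have "k + 1 \<in> S" using True N[of "k + 1"] k_max[OF jS] by (auto simp: S_def not_le)
      then show False using k_max by fastforce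
    qed
  next
    case False
    then show ?thesis using c k unfolding dyadic_cover_def by auto
  qed
  with k show ?thesis by blast
qed

definition cell :: "(int \<Rightarrow> ereal) \<Rightarrow> int \<Rightarrow> real set" where
  "cell xs k = {s. xs k < ereal s \<and> ereal s \<le> xs (k + 1)}"

definition open_cell :: "(int \<Rightarrow> ereal) \<Rightarrow> int \<Rightarrow> real set" where
  "open_cell xs k = {s. xs k < ereal s \<and> ereal s < xs (k + 1)}"

lemma cell_sets [simp, measurable]: "cell xs k \<in> sets borel"
  unfolding cell_def by measurable

lemma open_cell_sets [simp, measurable]: "open_cell xs k \<in> sets borel"
  unfolding open_cell_def by measurable

lemma AE_lborel_ereal_neq: "AE s in lborel. ereal s \<noteq> X"
proof (cases X)
  case (real z)
  show ?thesis using AE_lborel_singleton[of z] by (rule eventually_mono) (simp add: real)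
qed simp_all

lemma nn_integral_cell_eq_open_cell:
  "(\<integral>\<^sup>+ t\<in>cell xs k. f t \<partial>lborel) = (\<integral>\<^sup>+ t\<in>open_cell xs k. f t \<partial>lborel)"
  by (rule nn_integral_cong_AE, rule eventually_mono[OF AE_lborel_ereal_neq[of "xs (k + 1)"]])
     (auto simp: cell_def open_cell_def split: split_indicator)

lemma nn_integral_count_space_disjoint_Union:
  fixes f :: "real \<Rightarrow> ennreal" and Z :: "int set"
  assumes [measurable]: "f \<in> borel_measurable borel" "\<And>k. S k \<in> sets borel"
    and disj: "\<And>k j t. k \<in> Z \<Longrightarrow> j \<in> Z \<Longrightarrow> t \<in> S k \<Longrightarrow> t \<in> S j \<Longrightarrow> k = j"
  shows "(\<integral>\<^sup>+ k. (\<integral>\<^sup>+ t\<in>S k. f t \<partial>lborel) \<partial>count_space Z) = (\<integral>\<^sup>+ t\<in>(\<Union>k\<in>Z. S k). f t \<partial>lborel)"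
proof -
  have "(\<integral>\<^sup>+ k. f t * indicator (S k) t \<partial>count_space Z) = f t * indicator (\<Union>k\<in>Z. S k) t" for t
  proof (cases "\<exists>k\<in>Z. t \<in> S k")
    case True
    then obtain k where k: "k \<in> Z" "t \<in> S k" by auto
    have "(\<integral>\<^sup>+ j. f t * indicator (S j) t \<partial>count_space Z) = (\<integral>\<^sup>+ j. f t * indicator (S j) t \<partial>count_space {k})"
      by (rule nn_integral_count_space_eq) (use k disj in \<open>auto split: split_indicator\<close>)
    with k show ?thesis by (auto simp: nn_integral_count_space_finite split: split_indicator)
  next
    case False
    then have "(\<integral>\<^sup>+ j. f t * indicator (S j) t \<partial>count_space Z) = (\<integral>\<^sup>+ j. 0 \<partial>count_space Z)"
      by (intro nn_integral_cong) (auto split: split_indicator)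
    with False show ?thesis by (auto split: split_indicator)
  qed
  then show ?thesis
    by (simp add: nn_integral_count_space_nn_integral[symmetric])
qed

lemma nn_set_integral_cmult:
  assumes [measurable]: "f \<in> borel_measurable M" "A \<in> sets M"
  shows "(\<integral>\<^sup>+ t\<in>A. c * f t \<partial>M) = c * (\<integral>\<^sup>+ t\<in>A. f t \<partial>M)"
  by (simp add: mult.assoc nn_integral_cmult)

lemma nn_set_integral_mono_on:
  "(\<And>x. x \<in> A \<Longrightarrow> f x \<le> g x) \<Longrightarrow> (\<integral>\<^sup>+ x\<in>A. f x \<partial>M) \<le> (\<integral>\<^sup>+ x\<in>A. g x \<partial>M)"
  by (intro nn_integral_mono) (auto split: split_indicator)

lemma nonneg_meas_measurable: "nonneg_meas f \<Longrightarrow> f \<in> borel_measurable borel"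
  by (simp add: nonneg_meas_def)

lemma is_weight_measurable: "is_weight u \<Longrightarrow> u \<in> borel_measurable borel"
  by (simp add: is_weight_def nonneg_meas_measurable)

context
  fixes u :: "real \<Rightarrow> real" and Z :: "int set" and xs :: "int \<Rightarrow> ereal"
  assumes u: "is_weight u" and c: "dyadic_cover u Z xs"
begin

lemma cell_disjoint:
  assumes "k \<in> Z" "j \<in> Z" "t \<in> cell xs k" "t \<in> cell xs j"
  shows "k = j"
proof (rule ccontr)
  have False if "a \<in> Z" "b \<in> Z" "a < b" "t \<in> cell xs a" "t \<in> cell xs b" for a b
  proof -
    have "xs (a + 1) \<le> xs b" using dyadic_cover_succ_le[OF c] that by blast
    then show False using that unfolding cell_def by auto
  qed
  moreover assume "k \<noteq> j"
  ultimately show False using assms by (metis linorder_neqE)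
qed

lemma Union_cells_above:
  assumes m: "m \<in> Z" "xs m = ereal y"
  shows "(\<Union>k\<in>{k\<in>Z. m \<le> k}. cell xs k) = {y<..}"
proof (intro equalityI subsetI)
  fix t assume "t \<in> (\<Union>k\<in>{k\<in>Z. m \<le> k}. cell xs k)"
  then obtain k where k: "k \<in> Z" "m \<le> k" "t \<in> cell xs k" by auto
  have "xs m \<le> xs k" using dyadic_cover_le[OF c m(1) k(1,2)] .
  then have "xs m < ereal t" using k by (auto simp: cell_def intro: order.strict_trans1)
  then show "t \<in> {y<..}" using m by simp
next
  fix t assume t: "t \<in> {y<..}"
  obtain y' where "y' > 0" "xs m = ereal y'" using dyadic_cover_point[OF c m(1)] by metis
  then have "t > 0" using t m(2) by simp
  then obtain k where k: "k \<in> Z" "xs k < ereal t" "ereal t \<le> xs (k + 1)"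
    using dyadic_cover_exhausts[OF c u] by blast
  have "m \<le> k"
  proof (rule ccontr)
    assume "\<not> m \<le> k"
    then have "xs (k + 1) \<le> xs m" using dyadic_cover_succ_le[OF c k(1) m(1)] by simp
    then show False using k m t by (metis order.trans ereal_less_eq(3) greaterThan_iff not_le)
  qed
  then show "t \<in> (\<Union>k\<in>{k\<in>Z. m \<le> k}. cell xs k)" using k by (auto simp: cell_def)
qed

lemma Union_cells:
  shows "(\<Union>k\<in>Z. cell xs k) = {0<..}"
proof (intro equalityI subsetI)
  fix t assume "t \<in> (\<Union>k\<in>Z. cell xs k)"
  then obtain k where k: "k \<in> Z" "t \<in> cell xs k" by auto
  obtain y where "y > 0" "xs k = ereal y" using dyadic_cover_point[OF c k(1)] by metis
  then show "t \<in> {0<..}" using k by (auto simp: cell_def)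
next
  fix t :: real assume "t \<in> {0<..}"
  then show "t \<in> (\<Union>k\<in>Z. cell xs k)"
    using dyadic_cover_exhausts[OF c u] by (auto simp: cell_def)
qed

lemma nn_integral_cells:
  assumes "f \<in> borel_measurable borel"
  shows "(\<integral>\<^sup>+ k. (\<integral>\<^sup>+ t\<in>cell xs k. f t \<partial>lborel) \<partial>count_space Z) = (\<integral>\<^sup>+ t\<in>{0<..}. f t \<partial>lborel)"
  using nn_integral_count_space_disjoint_Union[OF assms cell_sets cell_disjoint] Union_cells
  by simp

lemma nn_integral_cells_above:
  assumes "f \<in> borel_measurable borel" "m \<in> Z" "xs m = ereal y"
  shows "(\<integral>\<^sup>+ k. (\<integral>\<^sup>+ t\<in>cell xs k. f t \<partial>lborel) * indicator {m..} k \<partial>count_space Z)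
    = (\<integral>\<^sup>+ t\<in>{y<..}. f t \<partial>lborel)"
proof -
  have "(\<integral>\<^sup>+ k. (\<integral>\<^sup>+ t\<in>cell xs k. f t \<partial>lborel) * indicator {m..} k \<partial>count_space Z)
      = (\<integral>\<^sup>+ k. (\<integral>\<^sup>+ t\<in>cell xs k. f t \<partial>lborel) \<partial>count_space {k\<in>Z. m \<le> k})"
    by (auto simp: nn_integral_count_space_indicator intro!: nn_integral_cong split: split_indicator)
  also have "\<dots> = (\<integral>\<^sup>+ t\<in>(\<Union>k\<in>{k\<in>Z. m \<le> k}. cell xs k). f t \<partial>lborel)"
    by (rule nn_integral_count_space_disjoint_Union[OF assms(1) cell_sets]) (use cell_disjoint in auto)
  finally show ?thesis using Union_cells_above[OF assms(2,3)] by simp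
qed

lemma weight_cell_eq:
  assumes "k \<in> Z" "k + 1 \<in> Z"
  shows "(\<integral>\<^sup>+ t\<in>cell xs k. ennreal (u t) \<partial>lborel) = ennreal (2 powr real_of_int k)"
proof -
  have [measurable]: "u \<in> borel_measurable borel" by (rule is_weight_measurable[OF u])
  obtain y where y: "y > 0" "xs k = ereal y" "weight_upto u y = ennreal (2 powr real_of_int k)"
    using dyadic_cover_point[OF c assms(1)] by metis
  obtain y' where y': "xs (k + 1) = ereal y'" "weight_upto u y' = ennreal (2 powr real_of_int (k + 1))"
    using dyadic_cover_point[OF c assms(2)] by metis
  have "y < y'"
    using c assms y y' unfolding dyadic_cover_def by fastforce
  then have "{0<..y'} = {0<..y} \<union> cell xs k" "cell xs k = {y<..y'}"
    using y y' by (auto simp: cell_def)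
  then have "weight_upto u y' = weight_upto u y + (\<integral>\<^sup>+ t\<in>cell xs k. ennreal (u t) \<partial>lborel)"
    unfolding weight_upto_def by (simp add: nn_integral_disjoint_pair)
  moreover have "ennreal (2 powr real_of_int (k + 1)) = ennreal (2 powr real_of_int k) + ennreal (2 powr real_of_int k)"
    by (simp add: powr_add ennreal_plus[symmetric] del: ennreal_plus)
  ultimately show ?thesis
    using y y' by (simp add: ennreal_add_left_cancel)
qed

lemma weight_cell_le:
  assumes "k \<in> Z"
  shows "(\<integral>\<^sup>+ t\<in>cell xs k. ennreal (u t) \<partial>lborel) \<le> ennreal (2 powr real_of_int k)"
proof (cases "k + 1 \<in> Z")
  case False
  have [measurable]: "u \<in> borel_measurable borel" by (rule is_weight_measurable[OF u])
  define a where "a = ennreal (2 powr real_of_int k)"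
  obtain y where y: "y > 0" "xs k = ereal y" "weight_upto u y = a"
    using dyadic_cover_point[OF c assms] unfolding a_def by metis
  have "xs (k + 1) = \<infinity>" and total: "weight_total u < ennreal (2 powr real_of_int (k + 1))"
    using c assms False unfolding dyadic_cover_def by auto
  then have cell: "cell xs k = {y<..}" using y by (auto simp: cell_def)
  have "{0<..} = {0<..y} \<union> {y<..}" using y by auto
  then have "weight_total u = (\<integral>\<^sup>+ t\<in>{0<..y} \<union> {y<..}. ennreal (u t) \<partial>lborel)"
    unfolding weight_total_def by simp
  also have "\<dots> = a + (\<integral>\<^sup>+ t\<in>cell xs k. ennreal (u t) \<partial>lborel)"
    unfolding cell y(3)[symmetric] weight_upto_def by (rule nn_integral_disjoint_pair) auto
  finally have "weight_total u = a + (\<integral>\<^sup>+ t\<in>cell xs k. ennreal (u t) \<partial>lborel)" .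
  moreover have "ennreal (2 powr real_of_int (k + 1)) = a + a"
    by (simp add: a_def powr_add ennreal_plus[symmetric] del: ennreal_plus)
  ultimately have "a + (\<integral>\<^sup>+ t\<in>cell xs k. ennreal (u t) \<partial>lborel) < a + a"
    using total by simp
  then show ?thesis unfolding a_def by (meson add_left_mono less_le_not_le nle_le)
qed (simp add: weight_cell_eq assms)

end

lemma borel_measurable_nn_integral_section:
  fixes f :: "real \<Rightarrow> ennreal"
  assumes f [measurable]: "f \<in> borel_measurable borel"
    and P [measurable]: "Measurable.pred (borel \<Otimes>\<^sub>M lborel) (\<lambda>x::real \<times> real. P (fst x) (snd x))"
  shows "(\<lambda>t. \<integral>\<^sup>+ s. f s * indicator {s. P t s} s \<partial>lborel) \<in> borel_measurable borel"
proof -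
  have "(\<lambda>x::real \<times> real. f (snd x) * indicator {s. P (fst x) s} (snd x)) \<in> borel_measurable (borel \<Otimes>\<^sub>M lborel)"
    unfolding indicator_def by measurable
  then show ?thesis
    using lborel.borel_measurable_nn_integral[of "\<lambda>t s. f s * indicator {s. P t s} s" borel] by simp
qed

text \<open>\<open>tail h\<close> is \<open>H\<close> and \<open>iterated_tail q w h\<close> is \<open>F\<close> from the header.\<close>

definition tail :: "(real \<Rightarrow> real) \<Rightarrow> real \<Rightarrow> ennreal" where
  "tail h t = (\<integral>\<^sup>+ s\<in>{t<..}. ennreal (h s) \<partial>lborel)"

definition tail_below :: "(real \<Rightarrow> real) \<Rightarrow> ereal \<Rightarrow> real \<Rightarrow> ennreal" where
  "tail_below h X s = (\<integral>\<^sup>+ t\<in>{t. s < t \<and> ereal t < X}. ennreal (h t) \<partial>lborel)"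

definition tail_beyond :: "(real \<Rightarrow> real) \<Rightarrow> ereal \<Rightarrow> ennreal" where
  "tail_beyond h X = (\<integral>\<^sup>+ t\<in>{t. X < ereal t}. ennreal (h t) \<partial>lborel)"

definition iterated_tail :: "real \<Rightarrow> (real \<Rightarrow> real) \<Rightarrow> (real \<Rightarrow> real) \<Rightarrow> real \<Rightarrow> ennreal" where
  "iterated_tail q w h x = (\<integral>\<^sup>+ t\<in>{x<..}. epow (tail h t) q * ennreal (w t) \<partial>lborel)"

lemma tail_measurable [measurable]: "h \<in> borel_measurable borel \<Longrightarrow> tail h \<in> borel_measurable borel"
  unfolding tail_def greaterThan_def
  by (rule borel_measurable_nn_integral_section[where P="\<lambda>t s. t < s"]) (auto simp: measurable_lborel2)

lemma tail_below_measurable [measurable]: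
  "h \<in> borel_measurable borel \<Longrightarrow> tail_below h X \<in> borel_measurable borel"
  unfolding tail_below_def
  by (rule borel_measurable_nn_integral_section[where P="\<lambda>t s. t < s \<and> ereal s < X"])
     (auto simp: measurable_lborel2)

lemma iterated_tail_measurable [measurable]:
  assumes [measurable]: "h \<in> borel_measurable borel" "w \<in> borel_measurable borel"
  shows "iterated_tail q w h \<in> borel_measurable borel"
  unfolding iterated_tail_def greaterThan_def
  by (rule borel_measurable_nn_integral_section[where P="\<lambda>t s. t < s"]) (auto simp: measurable_lborel2)

lemma iterated_tail_antimono: "x \<le> y \<Longrightarrow> iterated_tail q w h y \<le> iterated_tail q w h x"
  unfolding iterated_tail_def by (rule nn_set_integral_set_mono) auto

lemma tail_le_tail_below_add_beyond:
  assumes "h \<in> borel_measurable borel"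
  shows "tail h t \<le> tail_below h X t + tail_beyond h X"
proof -
  have "tail h t \<le> (\<integral>\<^sup>+ s. ennreal (h s) * indicator {s. t < s \<and> ereal s < X} s
      + ennreal (h s) * indicator {s. X < ereal s} s \<partial>lborel)"
    unfolding tail_def
    by (rule nn_integral_mono_AE, rule eventually_mono[OF AE_lborel_ereal_neq[of X]])
       (auto split: split_indicator simp: neq_iff)
  also have "\<dots> = tail_below h X t + tail_beyond h X"
    unfolding tail_below_def tail_beyond_def by (rule nn_integral_add) (use assms in auto)
  finally show ?thesis .
qed

definition upper_const :: "real \<Rightarrow> real \<Rightarrow> real" where
  "upper_const q r = (2 powr r * hardy_const (r/q) * 2 powr (r/q)) powr (1/r) * 2 powr (1/r)"

definition lower_const :: "real \<Rightarrow> real \<Rightarrow> real" where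
  "lower_const q r = 2 * (4 * 2 powr (r/q)) powr (1/r)"

locale iterated_hardy_cover =
  fixes q r :: real and u w h :: "real \<Rightarrow> real" and Z :: "int set" and xs :: "int \<Rightarrow> ereal"
  assumes q: "q > 0" and r: "r > 0" and u: "is_weight u" and w: "is_weight w"
    and h: "nonneg_meas h" and cover: "dyadic_cover u Z xs"
begin

lemma measurable_weights [measurable]:
  "h \<in> borel_measurable borel" "u \<in> borel_measurable borel" "w \<in> borel_measurable borel"
  using h u w by (simp_all add: nonneg_meas_measurable is_weight_measurable)

lemma r_div_q: "r / q > 0"
  using q r by simp

definition point :: "int \<Rightarrow> real" where
  "point k = real_of_ereal (xs k)"

lemma point: "k \<in> Z \<Longrightarrow> xs k = ereal (point k)"
  using dyadic_cover_point[OF cover] by (metis point_def real_of_ereal.simps(1))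

text \<open>\<open>L\<close>, \<open>D1\<close> and \<open>D2\<close> are the \<open>r\<close>-th powers of the three quantities compared in the
  theorem; \<open>S\<close> is the discretization of \<open>L\<close>.\<close>

definition A :: "int \<Rightarrow> ennreal" where
  "A k = (\<integral>\<^sup>+ s\<in>open_cell xs k. epow (tail_below h (xs (k + 1)) s) q * ennreal (w s) \<partial>lborel)"

definition B :: "int \<Rightarrow> ennreal" where
  "B k = (\<integral>\<^sup>+ s\<in>open_cell xs k. ennreal (w s) \<partial>lborel) * epow (tail_beyond h (xs (k + 1))) q"

definition L :: ennreal where
  "L = (\<integral>\<^sup>+ x\<in>{0<..}. epow (iterated_tail q w h x) (r/q) * ennreal (u x) \<partial>lborel)"

definition S :: ennreal where
  "S = (\<integral>\<^sup>+ k. ennreal (2 powr real_of_int k) * epow (iterated_tail q w h (point k)) (r/q) \<partial>count_space Z)"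

definition D1 :: ennreal where
  "D1 = (\<integral>\<^sup>+ k. ennreal (2 powr real_of_int k) * epow (A k) (r/q) \<partial>count_space Z)"

definition D2 :: ennreal where
  "D2 = (\<integral>\<^sup>+ k. ennreal (2 powr real_of_int k) * epow (B k) (r/q) \<partial>count_space Z)"

lemma lhs42_eq: "lhs42 q r u w h = epow L (1/r)"
  unfolding lhs42_def L_def iterated_tail_def tail_def ..

lemma disc1_eq: "disc1 q r Z xs w h = epow D1 (1/r)"
  unfolding disc1_def D1_def
proof (intro arg_cong[where f="\<lambda>x. epow x (1/r)"] nn_integral_cong)
  fix k :: int
  have "epow (ennreal (2 powr (real_of_int k / r)) * epow (A k) (1/q)) r
      = ennreal (2 powr real_of_int k) * epow (A k) (r/q)"
    using q r by (simp add: epow_2_powr_mult epow_epow)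
  then show "epow (ennreal (2 powr (real_of_int k / r)) *
        epow (\<integral>\<^sup>+ s\<in>{s. xs k < ereal s \<and> ereal s < xs (k + 1)}.
           epow (\<integral>\<^sup>+ t\<in>{t. s < t \<and> ereal t < xs (k + 1)}. ennreal (h t) \<partial>lborel) q
             * ennreal (w s) \<partial>lborel) (1 / q)) r = ennreal (2 powr real_of_int k) * epow (A k) (r/q)"
    unfolding A_def open_cell_def tail_below_def .
qed

lemma disc2_eq: "disc2 q r Z xs w h = epow D2 (1/r)"
  unfolding disc2_def D2_def
proof (intro arg_cong[where f="\<lambda>x. epow x (1/r)"] nn_integral_cong)
  fix k :: int
  define W where "W = (\<integral>\<^sup>+ s\<in>open_cell xs k. ennreal (w s) \<partial>lborel)"
  have "epow (ennreal (2 powr (real_of_int k / r)) * epow W (1/q) * tail_beyond h (xs (k + 1))) r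
      = ennreal (2 powr (real_of_int k / r * r)) * (epow (epow W (1/q)) r * epow (tail_beyond h (xs (k + 1))) r)"
    by (simp only: mult.assoc epow_mult[OF r] epow_2_powr)
  also have "\<dots> = ennreal (2 powr real_of_int k) * epow (B k) (r/q)"
    using q r by (simp add: epow_epow B_def W_def epow_mult)
  finally show "epow (ennreal (2 powr (real_of_int k / r)) *
        epow (\<integral>\<^sup>+ s\<in>{s. xs k < ereal s \<and> ereal s < xs (k + 1)}. ennreal (w s) \<partial>lborel) (1 / q) *
        (\<integral>\<^sup>+ t\<in>{t. xs (k + 1) < ereal t}. ennreal (h t) \<partial>lborel)) r
      = ennreal (2 powr real_of_int k) * epow (B k) (r/q)"
    unfolding W_def open_cell_def tail_beyond_def .
qed

lemma L_eq_sum_cells: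
  "L = (\<integral>\<^sup>+ k. (\<integral>\<^sup>+ x\<in>cell xs k. epow (iterated_tail q w h x) (r/q) * ennreal (u x) \<partial>lborel) \<partial>count_space Z)"
  unfolding L_def by (rule nn_integral_cells[OF u cover, symmetric]) measurable

lemma cell_term_le:
  assumes k: "k \<in> Z"
  shows "(\<integral>\<^sup>+ x\<in>cell xs k. epow (iterated_tail q w h x) (r/q) * ennreal (u x) \<partial>lborel)
     \<le> ennreal (2 powr real_of_int k) * epow (iterated_tail q w h (point k)) (r/q)"
proof -
  have "(\<integral>\<^sup>+ x\<in>cell xs k. epow (iterated_tail q w h x) (r/q) * ennreal (u x) \<partial>lborel)
      \<le> (\<integral>\<^sup>+ x\<in>cell xs k. epow (iterated_tail q w h (point k)) (r/q) * ennreal (u x) \<partial>lborel)"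
  proof (rule nn_set_integral_mono_on)
    fix x assume "x \<in> cell xs k"
    then have "point k \<le> x" using point[OF k] by (auto simp: cell_def)
    then show "epow (iterated_tail q w h x) (r/q) * ennreal (u x)
        \<le> epow (iterated_tail q w h (point k)) (r/q) * ennreal (u x)"
      by (intro mult_right_mono epow_mono r_div_q iterated_tail_antimono) auto
  qed
  also have "\<dots> = epow (iterated_tail q w h (point k)) (r/q) * (\<integral>\<^sup>+ x\<in>cell xs k. ennreal (u x) \<partial>lborel)"
    by (rule nn_set_integral_cmult) measurable
  also have "\<dots> \<le> epow (iterated_tail q w h (point k)) (r/q) * ennreal (2 powr real_of_int k)"
    by (rule mult_left_mono[OF weight_cell_le[OF u cover k]]) simp
  finally show ?thesis by (simp add: mult.commute)
qed

lemma L_le_S: "L \<le> S"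
  unfolding L_eq_sum_cells S_def by (rule nn_integral_mono) (simp add: cell_term_le)

text \<open>Going down one cell doubles the weight \<open>2\<^sup>k\<close> while \<open>F(x\<^sub>k) \<le> F\<close> on the cell below \<open>x\<^sub>k\<close>,
  which has \<open>u\<close>-mass exactly \<open>2\<^bsup>k-1\<^esup>\<close>.\<close>

lemma S_le_L: "S \<le> 2 * L"
proof -
  define g where "g j = (\<integral>\<^sup>+ x\<in>cell xs j. epow (iterated_tail q w h x) (r/q) * ennreal (u x) \<partial>lborel)" for j
  have down: "k - 1 \<in> Z" if "k \<in> Z" for k using cover that unfolding dyadic_cover_def by auto
  have "S \<le> (\<integral>\<^sup>+ k. 2 * g (k - 1) \<partial>count_space Z)"
    unfolding S_def
  proof (rule nn_integral_mono)
    fix k assume "k \<in> space (count_space Z)"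
    then have k: "k \<in> Z" by simp
    have "ennreal (2 powr real_of_int (k - 1)) * epow (iterated_tail q w h (point k)) (r/q)
        = (\<integral>\<^sup>+ x\<in>cell xs (k - 1). epow (iterated_tail q w h (point k)) (r/q) * ennreal (u x) \<partial>lborel)"
      using weight_cell_eq[OF u cover down[OF k]] k
      by (subst nn_set_integral_cmult) (simp_all add: mult.commute)
    also have "\<dots> \<le> g (k - 1)"
      unfolding g_def
    proof (rule nn_set_integral_mono_on)
      fix x assume "x \<in> cell xs (k - 1)"
      then have "x \<le> point k" using point[OF k] by (simp add: cell_def)
      then show "epow (iterated_tail q w h (point k)) (r/q) * ennreal (u x)
          \<le> epow (iterated_tail q w h x) (r/q) * ennreal (u x)"
        by (intro mult_right_mono epow_mono r_div_q iterated_tail_antimono) auto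
    qed
    finally have "ennreal (2 powr real_of_int (k - 1)) * epow (iterated_tail q w h (point k)) (r/q) \<le> g (k - 1)" .
    moreover have "ennreal (2 powr real_of_int k) = 2 * ennreal (2 powr real_of_int (k - 1))"
    proof -
      have "2 powr real_of_int k = 2 * 2 powr real_of_int (k - 1)" by (simp add: powr_diff)
      then show ?thesis by (simp add: ennreal_mult)
    qed
    ultimately show "ennreal (2 powr real_of_int k) * epow (iterated_tail q w h (point k)) (r/q) \<le> 2 * g (k - 1)"
      by (metis mult.assoc mult_left_mono zero_le)
  qed
  also have "\<dots> = 2 * (\<integral>\<^sup>+ k. g (k - 1) \<partial>count_space Z)"
    by (rule nn_integral_cmult) simp
  also have "(\<integral>\<^sup>+ k. g (k - 1) \<partial>count_space Z) = (\<integral>\<^sup>+ j. g j \<partial>count_space ((\<lambda>k. k - 1) ` Z))"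
    by (rule nn_integral_bij_count_space) (auto simp: bij_betw_def inj_on_def)
  also have "\<dots> \<le> (\<integral>\<^sup>+ j. g j \<partial>count_space Z)"
    by (rule nn_integral_count_space_mono_set) (use down in auto)
  also have "\<dots> = L" unfolding L_eq_sum_cells g_def ..
  finally show ?thesis by (simp add: mult_left_mono)
qed

lemma cell_integral_le:
  assumes j: "j \<in> Z"
  shows "(\<integral>\<^sup>+ t\<in>cell xs j. epow (tail h t) q * ennreal (w t) \<partial>lborel) \<le> ennreal (2 powr q) * (A j + B j)"
proof -
  define X where "X = xs (j + 1)"
  have "(\<integral>\<^sup>+ t\<in>cell xs j. epow (tail h t) q * ennreal (w t) \<partial>lborel)
      \<le> (\<integral>\<^sup>+ t\<in>cell xs j. ennreal (2 powr q) *
           (epow (tail_below h X t) q * ennreal (w t) + epow (tail_beyond h X) q * ennreal (w t)) \<partial>lborel)"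
  proof (rule nn_set_integral_mono_on)
    fix t
    have "epow (tail h t) q \<le> epow (tail_below h X t + tail_beyond h X) q"
      by (intro epow_mono[OF q] tail_le_tail_below_add_beyond) measurable
    also have "\<dots> \<le> ennreal (2 powr q) * (epow (tail_below h X t) q + epow (tail_beyond h X) q)"
      by (rule epow_add_le[OF q])
    finally have "epow (tail h t) q * ennreal (w t)
        \<le> ennreal (2 powr q) * (epow (tail_below h X t) q + epow (tail_beyond h X) q) * ennreal (w t)"
      by (rule mult_right_mono) simp
    then show "epow (tail h t) q * ennreal (w t)
        \<le> ennreal (2 powr q) * (epow (tail_below h X t) q * ennreal (w t) + epow (tail_beyond h X) q * ennreal (w t))"
      by (simp add: distrib_right mult.assoc)
  qed
  also have "\<dots> = ennreal (2 powr q) * (\<integral>\<^sup>+ t\<in>cell xs j.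
           epow (tail_below h X t) q * ennreal (w t) + epow (tail_beyond h X) q * ennreal (w t) \<partial>lborel)"
    by (rule nn_set_integral_cmult) measurable
  also have "(\<integral>\<^sup>+ t\<in>cell xs j.
           epow (tail_below h X t) q * ennreal (w t) + epow (tail_beyond h X) q * ennreal (w t) \<partial>lborel)
      = (\<integral>\<^sup>+ t\<in>cell xs j. epow (tail_below h X t) q * ennreal (w t) \<partial>lborel)
        + (\<integral>\<^sup>+ t\<in>cell xs j. epow (tail_beyond h X) q * ennreal (w t) \<partial>lborel)"
    by (rule nn_set_integral_add) measurable
  also have "(\<integral>\<^sup>+ t\<in>cell xs j. epow (tail_below h X t) q * ennreal (w t) \<partial>lborel) = A j"
    unfolding A_def X_def nn_integral_cell_eq_open_cell ..
  also have "(\<integral>\<^sup>+ t\<in>cell xs j. epow (tail_beyond h X) q * ennreal (w t) \<partial>lborel)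
      = epow (tail_beyond h X) q * (\<integral>\<^sup>+ t\<in>open_cell xs j. ennreal (w t) \<partial>lborel)"
    unfolding nn_integral_cell_eq_open_cell by (rule nn_set_integral_cmult) measurable
  also have "\<dots> = B j"
    unfolding B_def X_def by (rule mult.commute)
  finally show ?thesis .
qed

lemma iterated_tail_point_le:
  assumes k: "k \<in> Z"
  shows "iterated_tail q w h (point k) \<le> ennreal (2 powr q) * (\<integral>\<^sup>+ j. (A j + B j) * indicator {k..} j \<partial>count_space Z)"
proof -
  have "iterated_tail q w h (point k)
      = (\<integral>\<^sup>+ j. (\<integral>\<^sup>+ t\<in>cell xs j. epow (tail h t) q * ennreal (w t) \<partial>lborel) * indicator {k..} j \<partial>count_space Z)"
    unfolding iterated_tail_def by (rule nn_integral_cells_above[OF u cover _ k point[OF k], symmetric]) measurable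
  also have "\<dots> \<le> (\<integral>\<^sup>+ j. ennreal (2 powr q) * ((A j + B j) * indicator {k..} j) \<partial>count_space Z)"
    by (rule nn_integral_mono) (auto simp: mult.assoc[symmetric] intro!: mult_right_mono cell_integral_le)
  also have "\<dots> = ennreal (2 powr q) * (\<integral>\<^sup>+ j. (A j + B j) * indicator {k..} j \<partial>count_space Z)"
    by (rule nn_integral_cmult) simp
  finally show ?thesis .
qed

lemma S_le_D: "S \<le> ennreal (2 powr r * hardy_const (r/q) * 2 powr (r/q)) * (D1 + D2)"
proof -
  define T where "T k = (\<integral>\<^sup>+ j. (A j + B j) * indicator {k..} j \<partial>count_space Z)" for k
  have "S \<le> (\<integral>\<^sup>+ k. ennreal (2 powr r) * (ennreal (2 powr real_of_int k) * epow (T k) (r/q)) \<partial>count_space Z)"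
    unfolding S_def
  proof (rule nn_integral_mono)
    fix k assume "k \<in> space (count_space Z)"
    then have "epow (iterated_tail q w h (point k)) (r/q) \<le> epow (ennreal (2 powr q) * T k) (r/q)"
      by (intro epow_mono r_div_q) (simp add: T_def iterated_tail_point_le)
    also have "\<dots> = ennreal (2 powr r) * epow (T k) (r/q)"
      using q by (simp add: epow_2_powr_mult[OF r_div_q])
    finally show "ennreal (2 powr real_of_int k) * epow (iterated_tail q w h (point k)) (r/q)
        \<le> ennreal (2 powr r) * (ennreal (2 powr real_of_int k) * epow (T k) (r/q))"
      by (metis mult.left_commute mult_left_mono zero_le)
  qed
  also have "\<dots> = ennreal (2 powr r) * (\<integral>\<^sup>+ k. ennreal (2 powr real_of_int k) * epow (T k) (r/q) \<partial>count_space Z)"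
    by (rule nn_integral_cmult) simp
  also have "(\<integral>\<^sup>+ k. ennreal (2 powr real_of_int k) * epow (T k) (r/q) \<partial>count_space Z)
      \<le> ennreal (hardy_const (r/q)) * (\<integral>\<^sup>+ k. ennreal (2 powr real_of_int k) * epow (A k + B k) (r/q) \<partial>count_space Z)"
    unfolding T_def by (rule discrete_hardy[OF r_div_q])
  also have "(\<integral>\<^sup>+ k. ennreal (2 powr real_of_int k) * epow (A k + B k) (r/q) \<partial>count_space Z)
      \<le> (\<integral>\<^sup>+ k. ennreal (2 powr (r/q)) * (ennreal (2 powr real_of_int k) * epow (A k) (r/q)
          + ennreal (2 powr real_of_int k) * epow (B k) (r/q)) \<partial>count_space Z)"
    by (rule nn_integral_mono)
       (metis epow_add_le[OF r_div_q] distrib_left mult.left_commute mult_left_mono zero_le)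
  also have "\<dots> = ennreal (2 powr (r/q)) * (D1 + D2)"
    unfolding D1_def D2_def by (simp add: nn_integral_cmult nn_integral_add)
  finally have "S \<le> ennreal (2 powr r) * (ennreal (hardy_const (r/q)) * (ennreal (2 powr (r/q)) * (D1 + D2)))"
    by (simp add: mult_left_mono)
  then show ?thesis
    using hardy_const_pos[OF r_div_q] by (simp add: ennreal_mult mult.assoc)
qed

lemma A_le_iterated_tail: "k \<in> Z \<Longrightarrow> A k \<le> iterated_tail q w h (point k)"
  unfolding A_def iterated_tail_def
proof (rule order.trans[OF nn_set_integral_mono_on nn_set_integral_set_mono])
  fix s
  have "tail_below h (xs (k + 1)) s \<le> tail h s"
    unfolding tail_below_def tail_def by (rule nn_set_integral_set_mono) auto
  then show "epow (tail_below h (xs (k + 1)) s) q * ennreal (w s) \<le> epow (tail h s) q * ennreal (w s)"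
    by (intro mult_right_mono epow_mono q) auto
next
  show "k \<in> Z \<Longrightarrow> open_cell xs k \<subseteq> {point k<..}"
    using point by (auto simp: open_cell_def)
qed

lemma B_le_iterated_tail: "k \<in> Z \<Longrightarrow> B k \<le> iterated_tail q w h (point k)"
proof -
  assume k: "k \<in> Z"
  have "B k = (\<integral>\<^sup>+ s\<in>open_cell xs k. epow (tail_beyond h (xs (k + 1))) q * ennreal (w s) \<partial>lborel)"
    unfolding B_def by (subst nn_set_integral_cmult) (simp_all add: mult.commute)
  also have "\<dots> \<le> (\<integral>\<^sup>+ s\<in>open_cell xs k. epow (tail h s) q * ennreal (w s) \<partial>lborel)"
  proof (rule nn_set_integral_mono_on)
    fix s assume s: "s \<in> open_cell xs k"
    have "tail_beyond h (xs (k + 1)) \<le> tail h s"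
      unfolding tail_beyond_def tail_def
    proof (rule nn_set_integral_set_mono, rule subsetI)
      fix t assume "t \<in> {t. xs (k + 1) < ereal t}"
      then have "ereal s < ereal t" using s unfolding open_cell_def by (auto dest: order.strict_trans)
      then show "t \<in> {s<..}" by simp
    qed
    then show "epow (tail_beyond h (xs (k + 1))) q * ennreal (w s) \<le> epow (tail h s) q * ennreal (w s)"
      by (intro mult_right_mono epow_mono q) auto
  qed
  also have "\<dots> \<le> iterated_tail q w h (point k)"
    unfolding iterated_tail_def by (rule nn_set_integral_set_mono) (use point[OF k] in \<open>auto simp: open_cell_def\<close>)
  finally show ?thesis .
qed

lemma D_le_S: "D1 + D2 \<le> ennreal (2 * 2 powr (r/q)) * S"
proof -
  have "D1 + D2 = (\<integral>\<^sup>+ k. ennreal (2 powr real_of_int k) * (epow (A k) (r/q) + epow (B k) (r/q)) \<partial>count_space Z)"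
    unfolding D1_def D2_def by (simp add: distrib_left nn_integral_add)
  also have "\<dots> \<le> (\<integral>\<^sup>+ k. ennreal (2 * 2 powr (r/q)) *
      (ennreal (2 powr real_of_int k) * epow (iterated_tail q w h (point k)) (r/q)) \<partial>count_space Z)"
  proof (rule nn_integral_mono)
    fix k assume "k \<in> space (count_space Z)"
    then have k: "k \<in> Z" by simp
    have "epow (A k) (r/q) + epow (B k) (r/q) \<le> 2 * epow (A k + B k) (r/q)"
      by (rule epow_add_epow_le[OF r_div_q])
    also have "epow (A k + B k) (r/q) \<le> epow (2 * iterated_tail q w h (point k)) (r/q)"
      by (intro epow_mono r_div_q) (metis A_le_iterated_tail[OF k] B_le_iterated_tail[OF k] add_mono mult_2)
    also have "epow (2 * iterated_tail q w h (point k)) (r/q) = ennreal (2 powr (r/q)) * epow (iterated_tail q w h (point k)) (r/q)"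
      by (simp add: epow_mult[OF r_div_q] epow_2)
    finally have "epow (A k) (r/q) + epow (B k) (r/q) \<le> ennreal (2 * 2 powr (r/q)) * epow (iterated_tail q w h (point k)) (r/q)"
      by (simp add: mult_left_mono ennreal_mult mult.assoc)
    then show "ennreal (2 powr real_of_int k) * (epow (A k) (r/q) + epow (B k) (r/q))
        \<le> ennreal (2 * 2 powr (r/q)) * (ennreal (2 powr real_of_int k) * epow (iterated_tail q w h (point k)) (r/q))"
      by (metis mult.left_commute mult_left_mono zero_le)
  qed
  also have "\<dots> = ennreal (2 * 2 powr (r/q)) * S"
    unfolding S_def by (rule nn_integral_cmult) simp
  finally show ?thesis .
qed

lemma lhs42_le_disc: "lhs42 q r u w h \<le> ennreal (upper_const q r) * (disc1 q r Z xs w h + disc2 q r Z xs w h)"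
proof -
  define K where "K = 2 powr r * hardy_const (r/q) * 2 powr (r/q)"
  have r': "1/r > 0" using r by simp
  have "lhs42 q r u w h \<le> epow (ennreal K * (D1 + D2)) (1/r)"
    unfolding lhs42_eq K_def by (intro epow_mono r' order.trans[OF L_le_S S_le_D])
  also have "\<dots> = ennreal (K powr (1/r)) * epow (D1 + D2) (1/r)"
    using hardy_const_pos[OF r_div_q] r' by (simp add: K_def epow_ennreal_mult)
  also have "\<dots> \<le> ennreal (K powr (1/r)) * (ennreal (2 powr (1/r)) * (epow D1 (1/r) + epow D2 (1/r)))"
    by (intro mult_left_mono epow_add_le r') simp
  also have "\<dots> = ennreal (upper_const q r) * (disc1 q r Z xs w h + disc2 q r Z xs w h)"
    by (simp add: upper_const_def K_def disc1_eq disc2_eq ennreal_mult mult.assoc)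
  finally show ?thesis .
qed

lemma disc_le_lhs42: "disc1 q r Z xs w h + disc2 q r Z xs w h \<le> ennreal (lower_const q r) * lhs42 q r u w h"
proof -
  have r': "1/r > 0" using r by simp
  have "D1 + D2 \<le> ennreal (2 * 2 powr (r/q)) * (2 * L)"
    by (intro order.trans[OF D_le_S] mult_left_mono S_le_L) simp
  also have "\<dots> = ennreal (4 * 2 powr (r/q)) * L"
    by (simp add: ennreal_mult mult_ac)
  finally have D_le_L: "D1 + D2 \<le> ennreal (4 * 2 powr (r/q)) * L" .
  have "disc1 q r Z xs w h + disc2 q r Z xs w h \<le> 2 * epow (D1 + D2) (1/r)"
    unfolding disc1_eq disc2_eq by (rule epow_add_epow_le[OF r'])
  also have "\<dots> \<le> 2 * epow (ennreal (4 * 2 powr (r/q)) * L) (1/r)"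
    by (intro mult_left_mono epow_mono[OF r' D_le_L]) simp
  also have "epow (ennreal (4 * 2 powr (r/q)) * L) (1/r) = ennreal ((4 * 2 powr (r/q)) powr (1/r)) * lhs42 q r u w h"
    unfolding lhs42_eq by (rule epow_ennreal_mult) (use r' in simp_all)
  also have "2 * (ennreal ((4 * 2 powr (r/q)) powr (1/r)) * lhs42 q r u w h) = ennreal (lower_const q r) * lhs42 q r u w h"
    by (simp add: lower_const_def ennreal_mult mult.assoc)
  finally show ?thesis .
qed

end

theorem lemma4p2:
  fixes q r :: real
  assumes "0 < q" and "0 < r"
  shows "\<exists>C>0. \<forall>u v w h Z xs.
            is_weight u \<longrightarrow> is_weight v \<longrightarrow> is_weight w \<longrightarrow> nonneg_meas h \<longrightarrow>
            covering_seq u Z xs \<longrightarrow>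
            lhs42 q r u w h \<le> ennreal C * (disc1 q r Z xs w h + disc2 q r Z xs w h) \<and>
            disc1 q r Z xs w h + disc2 q r Z xs w h \<le> ennreal C * lhs42 q r u w h"
proof (intro exI[of _ "max (upper_const q r) (lower_const q r)"] conjI allI impI)
  let ?C = "max (upper_const q r) (lower_const q r)"
  show "?C > 0"
    using assms hardy_const_pos[of "r/q"] by (simp add: upper_const_def less_max_iff_disj)
  fix u v w h Z xs
  assume "is_weight u" "is_weight w" "nonneg_meas h" "covering_seq u Z xs"
  then interpret iterated_hardy_cover q r u w h Z xs
    using assms by unfold_locales (simp_all add: covering_seq_imp_dyadic_cover)
  show "lhs42 q r u w h \<le> ennreal ?C * (disc1 q r Z xs w h + disc2 q r Z xs w h)"
    by (rule order.trans[OF lhs42_le_disc mult_right_mono]) (simp_all add: ennreal_leI)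
  show "disc1 q r Z xs w h + disc2 q r Z xs w h \<le> ennreal ?C * lhs42 q r u w h"
    by (rule order.trans[OF disc_le_lhs42 mult_right_mono]) (simp_all add: ennreal_leI)
qed

end
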